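(* Let $\kappa\ge3$ and $\lambda\ge0$ be integers with $\lambda\le\kappa-2$, and let $\mathcal{G}=((\gamma_i,\alpha_i,\beta_i))_{i=1}^{g+1}$ be a $(\kappa,\lambda)$-graphical sequence. For $1\le i\le g$ let $\mathfrak{R}_i=\alpha_i+2\sqrt{\beta_i\gamma_i}$. Then: (i) $\mathfrak{R}_i\ge\mathfrak{R}_1$ for all $1\le i\le g$, with equality if and only if $(\gamma_i,\alpha_i,\beta_i)\in\{(1,\lambda,\kappa-\lambda-1),(\kappa-\lambda-1,\lambda,1)\}$; (ii) for any $2\le i\le g$, if $\beta_i\ge\gamma_i$ then $\mathfrak{R}_{i-1}<\mathfrak{R}_i$; (iii) for any $2\le i\le g-1$, if $\beta_i\le\gamma_i$ then $\mathfrak{R}_{i+1}<\mathfrak{R}_i$. In particular, the sequence $(\mathfrak{R}_i)_{i=1}^g$ is unimodal, i.e. there is $1\le t\le g$ with $\mathfrak{R}_1\le\dots\le\mathfrak{R}_t$ and $\mathfrak{R}_t\ge\dots\ge\mathfrak{R}_g$.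
   Context: For integers $\kappa\ge3$, $0\le\lambda\le\kappa-2$, let $V_{\kappa,\lambda}=\{(\gamma,\alpha,\beta)\in\mathbb{N}_0^3:\beta,\gamma\ge1,\ \gamma+\alpha+\beta=\kappa,\ \alpha\ge\max\{\lambda+1-\beta,\lambda+1-\gamma\}\}$. A $(\kappa,\lambda)$-graphical sequence is a sequence $\mathcal{G}=((\gamma_i,\alpha_i,\beta_i))_{i=1}^{g+1}$ of pairwise distinct elements of $\mathbb{N}_0^3$ such that: $(\gamma_i,\alpha_i,\beta_i)\in V_{\kappa,\lambda}$ for $1\le i\le g$; $(\gamma_1,\alpha_1,\beta_1)=(1,\lambda,\kappa-\lambda-1)$; $\beta_i\ge\beta_{i+1}$ for $1\le i\le g-1$ and $\gamma_i\le\gamma_{i+1}$ for $1\le i\le g$; $\beta_{g+1}=0$ and $\gamma_{g+1}+\alpha_{g+1}=\kappa$. *)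

theory Defs
  imports Complex_Main
begin

definition V_set :: "nat \<Rightarrow> nat \<Rightarrow> (nat \<times> nat \<times> nat) set" where
  "V_set kap lam = {(gam, alp, bet). bet \<ge> 1 \<and> gam \<ge> 1 \<and> gam + alp + bet = kap \<and>
      int alp \<ge> max (int lam + 1 - int bet) (int lam + 1 - int gam)}"

definition graphical_seq :: "nat \<Rightarrow> nat \<Rightarrow> nat \<Rightarrow> (nat \<Rightarrow> nat \<times> nat \<times> nat) \<Rightarrow> bool" where
  "graphical_seq kap lam g x \<longleftrightarrow>
     inj_on x {1..g+1} \<and>
     (\<forall>i\<in>{1..g}. x i \<in> V_set kap lam) \<and>
     x 1 = (1, lam, kap - lam - 1) \<and>
     (\<forall>i. 1 \<le> i \<and> i \<le> g - 1 \<longrightarrow> snd (snd (x i)) \<ge> snd (snd (x (i+1)))) \<and>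
     (\<forall>i. 1 \<le> i \<and> i \<le> g \<longrightarrow> fst (x i) \<le> fst (x (i+1))) \<and>
     snd (snd (x (g+1))) = 0 \<and> fst (x (g+1)) + fst (snd (x (g+1))) = kap"

definition Rfrak :: "(nat \<Rightarrow> nat \<times> nat \<times> nat) \<Rightarrow> nat \<Rightarrow> real" where
  "Rfrak x i = real (fst (snd (x i))) + 2 * sqrt (real (snd (snd (x i))) * real (fst (x i)))"

end

theory Submission
  imports Defs
begin

text \<open>Since \<open>\<gamma> + \<alpha> + \<beta> = \<kappa>\<close>, we have \<open>\<R> = \<kappa> - (\<surd>\<beta> - \<surd>\<gamma>)\<^sup>2\<close>, so every claim is a
  statement about the gap \<open>\<bar>\<surd>\<beta> - \<surd>\<gamma>\<bar>\<close>. Along a graphical sequence \<open>\<beta>\<close> decreases and \<open>\<gamma>\<close>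
  increases, and consecutive terms differ, so the gap strictly shrinks while \<open>\<beta> \<ge> \<gamma>\<close> and
  strictly grows once \<open>\<beta> \<le> \<gamma>\<close>; the indices with \<open>\<beta> \<ge> \<gamma>\<close> form an initial segment, which
  gives unimodality. Both coordinates lie in \<open>[1, \<kappa> - \<lambda> - 1]\<close>, so the gap is largest
  exactly at the two extreme corners.\<close>

abbreviation gamma_of :: "(nat \<Rightarrow> nat \<times> nat \<times> nat) \<Rightarrow> nat \<Rightarrow> nat" where
  "gamma_of x i \<equiv> fst (x i)"

abbreviation alpha_of :: "(nat \<Rightarrow> nat \<times> nat \<times> nat) \<Rightarrow> nat \<Rightarrow> nat" where
  "alpha_of x i \<equiv> fst (snd (x i))"

abbreviation beta_of :: "(nat \<Rightarrow> nat \<times> nat \<times> nat) \<Rightarrow> nat \<Rightarrow> nat" where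
  "beta_of x i \<equiv> snd (snd (x i))"

lemma plus_two_sqrt_eq_minus_sqrt_gap:
  assumes "c + a + b = (k::nat)"
  shows "real a + 2 * sqrt (real b * real c) = real k - (sqrt (real b) - sqrt (real c))\<^sup>2"
  using assms by (simp add: power2_diff real_sqrt_mult)

lemma sqrt_gap_le:
  fixes b c m :: nat
  assumes "1 \<le> b" "1 \<le> c" "b \<le> m" "c \<le> m"
  shows "(sqrt b - sqrt c)\<^sup>2 \<le> (sqrt m - 1)\<^sup>2"
    and "(sqrt b - sqrt c)\<^sup>2 = (sqrt m - 1)\<^sup>2 \<longleftrightarrow> (b = m \<and> c = 1) \<or> (b = 1 \<and> c = m)"
proof -
  have le_m: "sqrt b \<le> sqrt m" "sqrt c \<le> sqrt m" and ge_1: "1 \<le> sqrt b" "1 \<le> sqrt c"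
    using assms by auto
  have abs_le: "\<bar>sqrt b - sqrt c\<bar> \<le> sqrt m - 1"
    using le_m ge_1 by linarith
  then show "(sqrt b - sqrt c)\<^sup>2 \<le> (sqrt m - 1)\<^sup>2"
    by (metis abs_ge_zero power2_abs power_mono)
  have "(sqrt b - sqrt c)\<^sup>2 = (sqrt m - 1)\<^sup>2 \<longleftrightarrow> \<bar>sqrt b - sqrt c\<bar> = sqrt m - 1"
    using abs_le by (metis abs_ge_zero order.trans power2_abs power2_eq_iff_nonneg)
  also have "\<dots> \<longleftrightarrow> (b = m \<and> c = 1) \<or> (b = 1 \<and> c = m)"
  proof
    assume gap: "\<bar>sqrt b - sqrt c\<bar> = sqrt m - 1"
    show "(b = m \<and> c = 1) \<or> (b = 1 \<and> c = m)"
    proof (cases "c \<le> b")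
      case True
      then have "sqrt b - sqrt c = sqrt m - 1"
        using gap by simp
      then have "sqrt b = sqrt m" "sqrt c = 1"
        using le_m ge_1 by linarith+
      then show ?thesis by simp
    next
      case False
      then have "sqrt c - sqrt b = sqrt m - 1"
        using gap by simp
      then have "sqrt c = sqrt m" "sqrt b = 1"
        using le_m ge_1 by linarith+
      then show ?thesis by simp
    qed
  qed (use ge_1 le_m in auto)
  finally show "(sqrt b - sqrt c)\<^sup>2 = (sqrt m - 1)\<^sup>2 \<longleftrightarrow> (b = m \<and> c = 1) \<or> (b = 1 \<and> c = m)" .
qed

lemma sqrt_gap_less:
  fixes b b' c c' :: nat
  assumes "b \<le> b'" "c \<le> b" "c' \<le> c" "(b', c') \<noteq> (b, c)"
  shows "(sqrt b - sqrt c)\<^sup>2 < (sqrt b' - sqrt c')\<^sup>2"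
proof -
  have "sqrt b \<le> sqrt b'" "sqrt c \<le> sqrt b" "sqrt c' \<le> sqrt c"
    using assms by auto
  moreover have "sqrt b < sqrt b' \<or> sqrt c' < sqrt c"
    using assms by auto
  ultimately have "0 \<le> sqrt b - sqrt c" "sqrt b - sqrt c < sqrt b' - sqrt c'"
    by linarith+
  then show ?thesis
    by (simp add: power_strict_mono)
qed

lemma unimodal_if_rises_then_falls:
  fixes f :: "nat \<Rightarrow> 'a::linorder"
  assumes "1 \<le> s" "s \<le> g"
    and rise: "\<And>n. 1 \<le> n \<Longrightarrow> n < s \<Longrightarrow> f n \<le> f (Suc n)"
    and fall: "\<And>n. s < n \<Longrightarrow> n < g \<Longrightarrow> f (Suc n) \<le> f n"
  shows "\<exists>t. 1 \<le> t \<and> t \<le> g \<and>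
           (\<forall>i j. 1 \<le> i \<and> i \<le> j \<and> j \<le> t \<longrightarrow> f i \<le> f j) \<and>
           (\<forall>i j. t \<le> i \<and> i \<le> j \<and> j \<le> g \<longrightarrow> f j \<le> f i)"
proof -
  have peak: "\<exists>t. 1 \<le> t \<and> t \<le> g \<and>
           (\<forall>i j. 1 \<le> i \<and> i \<le> j \<and> j \<le> t \<longrightarrow> f i \<le> f j) \<and>
           (\<forall>i j. t \<le> i \<and> i \<le> j \<and> j \<le> g \<longrightarrow> f j \<le> f i)"
    if "1 \<le> t" "t \<le> g"
      and "\<And>n. n \<in> {1..<t} \<Longrightarrow> f n \<le> f (Suc n)"
      and "\<And>n. n \<in> {t..<g} \<Longrightarrow> f (Suc n) \<le> f n" for t
  proof (intro exI conjI allI impI)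
    fix i j
    assume "1 \<le> i \<and> i \<le> j \<and> j \<le> t"
    then show "f i \<le> f j"
      using lift_Suc_mono_le_ivl[of "{1..<t}" f i j] that(3) by auto
  next
    fix i j
    assume "t \<le> i \<and> i \<le> j \<and> j \<le> g"
    then show "f j \<le> f i"
      using lift_Suc_antimono_le_ivl[of "{t..<g}" f i j] that(4) by auto
  qed (use that in auto)
  \<comment> \<open>Only the step from \<open>s\<close> to \<open>s + 1\<close> is unconstrained; the peak is the larger of the two.\<close>
  show ?thesis
  proof (cases "s < g \<and> f s \<le> f (Suc s)")
    case True
    show ?thesis
    proof (rule peak[of "Suc s"])
      show "f n \<le> f (Suc n)" if "n \<in> {1..<Suc s}" for n
        using that True rise by (cases "n = s") auto
    qed (use True fall in auto)
  next
    case False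
    show ?thesis
    proof (rule peak[of s])
      show "f (Suc n) \<le> f n" if "n \<in> {s..<g}" for n
        using that False fall by (cases "n = s") auto
    qed (use assms in auto)
  qed
qed

lemma graphical_seq_entry:
  assumes "graphical_seq kap lam g x" "1 \<le> i" "i \<le> g"
  shows "1 \<le> beta_of x i" "1 \<le> gamma_of x i"
    and "gamma_of x i + alpha_of x i + beta_of x i = kap"
    and "beta_of x i \<le> kap - lam - 1" "gamma_of x i \<le> kap - lam - 1"
proof -
  obtain c a b where "x i = (c, a, b)"
    by (cases "x i") auto
  moreover have "x i \<in> V_set kap lam"
    using assms unfolding graphical_seq_def by auto
  ultimately show "1 \<le> beta_of x i" "1 \<le> gamma_of x i"
    and "gamma_of x i + alpha_of x i + beta_of x i = kap"
    and "beta_of x i \<le> kap - lam - 1" "gamma_of x i \<le> kap - lam - 1"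
    by (auto simp: V_set_def)
qed

lemma graphical_seq_step:
  assumes "graphical_seq kap lam g x" "1 \<le> i" "i < g"
  shows "beta_of x (Suc i) \<le> beta_of x i" "gamma_of x i \<le> gamma_of x (Suc i)"
    and "(beta_of x (Suc i), gamma_of x (Suc i)) \<noteq> (beta_of x i, gamma_of x i)"
proof -
  show "beta_of x (Suc i) \<le> beta_of x i" "gamma_of x i \<le> gamma_of x (Suc i)"
    using assms unfolding graphical_seq_def by auto
  show "(beta_of x (Suc i), gamma_of x (Suc i)) \<noteq> (beta_of x i, gamma_of x i)"
  proof
    assume same: "(beta_of x (Suc i), gamma_of x (Suc i)) = (beta_of x i, gamma_of x i)"
    moreover have "alpha_of x (Suc i) = alpha_of x i"
      using same graphical_seq_entry(3)[OF assms(1), of i] graphical_seq_entry(3)[OF assms(1), of "Suc i"]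
        assms(2,3) by simp
    ultimately have "x (Suc i) = x i"
      by (simp add: prod_eq_iff)
    moreover have "inj_on x {1..g+1}"
      using assms(1) unfolding graphical_seq_def by simp
    ultimately show False
      using assms(2,3) by (auto dest: inj_onD)
  qed
qed

lemma graphical_seq_length_pos:
  assumes "graphical_seq kap lam g x" "lam + 2 \<le> kap"
  shows "1 \<le> g"
proof (rule ccontr)
  assume "\<not> 1 \<le> g"
  then have "g + 1 = 1" by simp
  moreover have "beta_of x (g + 1) = 0" "beta_of x 1 = kap - lam - 1"
    using assms(1) unfolding graphical_seq_def by simp_all
  ultimately show False
    using assms(2) by simp
qed

lemma Rfrak_graphical_seq:
  assumes "graphical_seq kap lam g x" "1 \<le> i" "i \<le> g"
  shows "Rfrak x i = real kap - (sqrt (beta_of x i) - sqrt (gamma_of x i))\<^sup>2"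
  unfolding Rfrak_def
  by (rule plus_two_sqrt_eq_minus_sqrt_gap) (rule graphical_seq_entry(3)[OF assms])

lemma Rfrak_graphical_seq_ge_first:
  assumes "graphical_seq kap lam g x" "1 \<le> i" "i \<le> g"
  shows "Rfrak x 1 \<le> Rfrak x i"
    and "Rfrak x i = Rfrak x 1 \<longleftrightarrow> x i \<in> {(1, lam, kap - lam - 1), (kap - lam - 1, lam, 1)}"
proof -
  let ?m = "kap - lam - 1"
  note entry = graphical_seq_entry[OF assms]
  note gap = sqrt_gap_le[of "beta_of x i" "gamma_of x i" ?m, OF entry(1,2,4,5)]
  have x1: "x 1 = (1, lam, ?m)"
    using assms(1) unfolding graphical_seq_def by simp
  have R1: "Rfrak x 1 = real kap - (sqrt ?m - 1)\<^sup>2"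
    using Rfrak_graphical_seq[OF assms(1), of 1] assms(2,3) x1 by simp
  show "Rfrak x 1 \<le> Rfrak x i"
    using gap(1) R1 Rfrak_graphical_seq[OF assms] by simp
  have "x i \<in> {(1, lam, ?m), (?m, lam, 1)} \<longleftrightarrow>
      (beta_of x i = ?m \<and> gamma_of x i = 1) \<or> (beta_of x i = 1 \<and> gamma_of x i = ?m)"
    using entry by (cases "x i") auto
  then show "Rfrak x i = Rfrak x 1 \<longleftrightarrow> x i \<in> {(1, lam, ?m), (?m, lam, 1)}"
    using gap(2) R1 Rfrak_graphical_seq[OF assms] by simp
qed

lemma Rfrak_graphical_seq_rises:
  assumes "graphical_seq kap lam g x" "1 \<le> i" "i < g"
    and "gamma_of x (Suc i) \<le> beta_of x (Suc i)"
  shows "Rfrak x i < Rfrak x (Suc i)"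
proof -
  note step = graphical_seq_step[OF assms(1-3)]
  have "(sqrt (beta_of x (Suc i)) - sqrt (gamma_of x (Suc i)))\<^sup>2 <
      (sqrt (beta_of x i) - sqrt (gamma_of x i))\<^sup>2"
    by (rule sqrt_gap_less[OF step(1) assms(4) step(2) not_sym[OF step(3)]])
  then show ?thesis
    using Rfrak_graphical_seq[OF assms(1)] assms(2,3) by simp
qed

lemma Rfrak_graphical_seq_falls:
  assumes "graphical_seq kap lam g x" "1 \<le> i" "i < g"
    and "beta_of x i \<le> gamma_of x i"
  shows "Rfrak x (Suc i) < Rfrak x i"
proof -
  note step = graphical_seq_step[OF assms(1-3)]
  have "(gamma_of x (Suc i), beta_of x (Suc i)) \<noteq> (gamma_of x i, beta_of x i)"
    using step(3) by auto
  then have "(sqrt (gamma_of x i) - sqrt (beta_of x i))\<^sup>2 <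
      (sqrt (gamma_of x (Suc i)) - sqrt (beta_of x (Suc i)))\<^sup>2"
    by (rule sqrt_gap_less[OF step(2) assms(4) step(1)])
  then show ?thesis
    using Rfrak_graphical_seq[OF assms(1)] assms(2,3) by (simp add: power2_commute)
qed

lemma Rfrak_graphical_seq_unimodal:
  assumes "graphical_seq kap lam g x" "1 \<le> g"
  shows "\<exists>t. 1 \<le> t \<and> t \<le> g \<and>
           (\<forall>i j. 1 \<le> i \<and> i \<le> j \<and> j \<le> t \<longrightarrow> Rfrak x i \<le> Rfrak x j) \<and>
           (\<forall>i j. t \<le> i \<and> i \<le> j \<and> j \<le> g \<longrightarrow> Rfrak x j \<le> Rfrak x i)"
proof -
  define S where "S = {k \<in> {1..g}. gamma_of x k \<le> beta_of x k}"
  define s where "s = Max S"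
  have "gamma_of x 1 = 1"
    using assms(1) unfolding graphical_seq_def by simp
  then have "1 \<in> S"
    using graphical_seq_entry(1)[OF assms(1) order_refl assms(2)] assms(2) by (simp add: S_def)
  then have "s \<in> S"
    unfolding s_def by (intro Max_in) (auto simp: S_def)
  then have s: "1 \<le> s" "s \<le> g" "gamma_of x s \<le> beta_of x s"
    by (auto simp: S_def)
  have below: "gamma_of x k \<le> beta_of x k" if "1 \<le> k" "k \<le> s" for k
  proof -
    define h where "h n = int (beta_of x n) - int (gamma_of x n)" for n
    have "h (Suc n) \<le> h n" if "n \<in> {1..<s}" for n
      using graphical_seq_step(1,2)[OF assms(1), of n] that s(2) by (simp add: h_def)
    then have "h s \<le> h k"
      using lift_Suc_antimono_le_ivl[of "{1..<s}" h k s] that by auto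
    then show ?thesis
      using s(3) by (simp add: h_def)
  qed
  have above: "beta_of x k < gamma_of x k" if "s < k" "k \<le> g" for k
  proof (rule ccontr)
    assume "\<not> beta_of x k < gamma_of x k"
    then have "k \<in> S"
      using that s(1) by (auto simp: S_def)
    then have "k \<le> s"
      unfolding s_def by (rule Max_ge[rotated]) (simp add: S_def)
    then show False
      using that(1) by simp
  qed
  show ?thesis
  proof (rule unimodal_if_rises_then_falls[OF s(1,2)])
    show "Rfrak x n \<le> Rfrak x (Suc n)" if "1 \<le> n" "n < s" for n
      using Rfrak_graphical_seq_rises[OF assms(1) that(1)] below[of "Suc n"] that s(2)
      by (simp add: less_imp_le)
    show "Rfrak x (Suc n) \<le> Rfrak x n" if "s < n" "n < g" for n
      using Rfrak_graphical_seq_falls[OF assms(1), of n] above[of n] that s(1)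
      by (simp add: less_imp_le)
  qed
qed

theorem lemma3p3:
  fixes kap lam g :: nat and x :: "nat \<Rightarrow> nat \<times> nat \<times> nat"
  assumes "kap \<ge> 3" and "lam \<le> kap - 2"
    and "graphical_seq kap lam g x"
  shows "(\<forall>i. 1 \<le> i \<and> i \<le> g \<longrightarrow>
            Rfrak x i \<ge> Rfrak x 1 \<and>
            (Rfrak x i = Rfrak x 1 \<longleftrightarrow>
               x i \<in> {(1, lam, kap - lam - 1), (kap - lam - 1, lam, 1)}))
       \<and> (\<forall>i. 2 \<le> i \<and> i \<le> g \<and> snd (snd (x i)) \<ge> fst (x i) \<longrightarrow> Rfrak x (i - 1) < Rfrak x i)
       \<and> (\<forall>i. 2 \<le> i \<and> i \<le> g - 1 \<and> snd (snd (x i)) \<le> fst (x i) \<longrightarrow> Rfrak x (i + 1) < Rfrak x i)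
       \<and> (\<exists>t. 1 \<le> t \<and> t \<le> g \<and>
            (\<forall>i j. 1 \<le> i \<and> i \<le> j \<and> j \<le> t \<longrightarrow> Rfrak x i \<le> Rfrak x j) \<and>
            (\<forall>i j. t \<le> i \<and> i \<le> j \<and> j \<le> g \<longrightarrow> Rfrak x j \<le> Rfrak x i))"
proof (intro conjI allI impI)
  note graph = assms(3)
  show "Rfrak x 1 \<le> Rfrak x i"
    and "Rfrak x i = Rfrak x 1 \<longleftrightarrow> x i \<in> {(1, lam, kap - lam - 1), (kap - lam - 1, lam, 1)}"
    if "1 \<le> i \<and> i \<le> g" for i
    using Rfrak_graphical_seq_ge_first[OF graph] that by blast+
  show "Rfrak x (i - 1) < Rfrak x i"
    if "2 \<le> i \<and> i \<le> g \<and> beta_of x i \<ge> gamma_of x i" for i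
  proof -
    have "Rfrak x (i - 1) < Rfrak x (Suc (i - 1))"
      using that by (intro Rfrak_graphical_seq_rises[OF graph]) auto
    then show ?thesis
      using that by simp
  qed
  show "Rfrak x (i + 1) < Rfrak x i"
    if "2 \<le> i \<and> i \<le> g - 1 \<and> beta_of x i \<le> gamma_of x i" for i
  proof -
    have "Rfrak x (Suc i) < Rfrak x i"
      using that by (intro Rfrak_graphical_seq_falls[OF graph]) auto
    then show ?thesis
      by simp
  qed
  have "1 \<le> g"
    using graphical_seq_length_pos[OF graph] assms(1,2) by simp
  then show "\<exists>t. 1 \<le> t \<and> t \<le> g \<and>
            (\<forall>i j. 1 \<le> i \<and> i \<le> j \<and> j \<le> t \<longrightarrow> Rfrak x i \<le> Rfrak x j) \<and>
            (\<forall>i j. t \<le> i \<and> i \<le> j \<and> j \<le> g \<longrightarrow> Rfrak x j \<le> Rfrak x i)"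
    by (rule Rfrak_graphical_seq_unimodal[OF graph])
qed

end
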